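(* Let $\alpha$ be a composition, $w\in CRHW_n$ with $w(\alpha)=\beta\neq0$, $\tau=\tau_w$, and let $j\ge1$ belong to $\mathrm{supp}(w)$ but not be its maximum. If $j\notin\mathrm{leg}(w)$, then the greatest entry of $\tau$ in column $j$ is strictly less than the smallest entry of $\tau$ in column $j+1$.
   Context: Box-adding operators on compositions $\alpha=(\alpha_1,\dots,\alpha_k)$: $\mathfrak t_1(\alpha)=(1,\alpha_1,\dots,\alpha_k)$ (a new row on top); for $i\ge2$, $\mathfrak t_i(\alpha)$ increases the leftmost part equal to $i-1$ by $1$ (adding a box in column $i$), and is $0$ if there is no such part; $\mathfrak t_i(0)=0$. Diagrams: row $i$ has $\alpha_i$ left-justified boxes, rows numbered top to bottom. A word $w=\mathfrak t_{i_1}\cdots\mathfrak t_{i_n}$ acts by $w(\alpha)=\mathfrak t_{i_1}(\cdots\mathfrak t_{i_n}(\alpha))$. It is a reverse $k$-hookword if $i_1\le\cdots\le i_{k+1}>i_{k+2}>\cdots>i_n$ ($0\le k\le n-1$), and then $\mathrm{leg}(w)=\{i_{k+1},\dots,i_n\}$. $\mathrm{supp}(w)=\{i_1,\dots,i_n\}$; $w$ is connected if $\mathrm{supp}(w)$ is a set of consecutive integers; $CRHW_n$ is the set of connected reverse hookwords of length $n$. If $w(\alpha)=\beta\ne0$, applying $\mathfrak t_{i_n},\dots,\mathfrak t_{i_1}$ successively adds one box at each step (the box added by $\mathfrak t_{i_m}$ is in column $i_m$); $\tau_w$ is the filling of the set of added boxes in which the box added by $\mathfrak t_{i_m}$ has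 entry $m$. *)

theory Defs
  imports Main
begin

(* A composition: a finite list of positive integers (alpha_1,...,alpha_k); row i (1-indexed) has alpha_i boxes. *)
definition is_composition :: "nat list \<Rightarrow> bool" where
  "is_composition \<alpha> \<longleftrightarrow> (\<forall>a\<in>set \<alpha>. 0 < a)"

(* Box-adding operator t_i applied to a composition, returning the new composition together
   with the (row, column) position (1-indexed, rows top to bottom) of the added box;
   None represents 0.  t_i is only defined for i >= 1. *)
definition tbox :: "nat \<Rightarrow> nat list \<Rightarrow> (nat list \<times> nat \<times> nat) option" where
  "tbox i \<alpha> =
     (if i = 0 then None
      else if i = 1 then Some (1 # \<alpha>, 1, 1)
      else if (i - 1) \<in> set \<alpha> then
        (let k = (LEAST k. k < length \<alpha> \<and> \<alpha> ! k = i - 1) in Some (\<alpha>[k := i], Suc k, i))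
      else None)"

definition top :: "nat \<Rightarrow> nat list option \<Rightarrow> nat list option" where
  "top i x = Option.bind x (\<lambda>\<alpha>. map_option fst (tbox i \<alpha>))"

definition act :: "nat list \<Rightarrow> nat list \<Rightarrow> nat list option" where
  "act w \<alpha> = foldr top w (Some \<alpha>)"

(* Simultaneously computes w(alpha) and the filling tau_w of the added boxes
   (box added by t_{i_m} gets entry m); positions are in the coordinates of the current diagram,
   so when t_1 adds a new top row, previously added boxes move down one row. *)
fun fill :: "nat list \<Rightarrow> nat list \<Rightarrow> (nat list \<times> (nat \<times> nat \<Rightarrow> nat option)) option" where
  "fill [] \<alpha> = Some (\<alpha>, \<lambda>_. None)"
| "fill (i # w) \<alpha> =
     (case fill w \<alpha> of
        None \<Rightarrow> None
      | Some (\<gamma>, F) \<Rightarrow>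
          (case tbox i \<gamma> of
             None \<Rightarrow> None
           | Some (\<delta>, r, c) \<Rightarrow>
               Some (\<delta>, \<lambda>(a, b).
                  if (a, b) = (r, c) then Some 1
                  else if i = 1 then (if a \<le> 1 then None else map_option Suc (F (a - 1, b)))
                  else map_option Suc (F (a, b)))))"

(* tau_w (only meaningful when w(alpha) \<noteq> 0) *)
definition tau :: "nat list \<Rightarrow> nat list \<Rightarrow> (nat \<times> nat \<Rightarrow> nat option)" where
  "tau w \<alpha> = (case fill w \<alpha> of None \<Rightarrow> (\<lambda>_. None) | Some (_, F) \<Rightarrow> F)"

definition col_entries :: "(nat \<times> nat \<Rightarrow> nat option) \<Rightarrow> nat \<Rightarrow> nat set" where
  "col_entries F j = {e. \<exists>r. F (r, j) = Some e}"

definition supp :: "nat list \<Rightarrow> nat set" where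
  "supp w = set w"

(* w = t_{i_1} ... t_{i_n} is a reverse k-hookword: i_1 <= ... <= i_{k+1} > i_{k+2} > ... > i_n,
   0 <= k <= n-1 (lists are 0-indexed here) *)
definition rev_k_hookword :: "nat \<Rightarrow> nat list \<Rightarrow> bool" where
  "rev_k_hookword k w \<longleftrightarrow> 0 \<notin> set w \<and> k < length w \<and>
     sorted (take (Suc k) w) \<and> sorted_wrt (>) (drop k w)"

definition rev_hookword :: "nat list \<Rightarrow> bool" where
  "rev_hookword w \<longleftrightarrow> (\<exists>k. rev_k_hookword k w)"

(* leg(w) = {i_{k+1},...,i_n}; k is unique *)
definition leg :: "nat list \<Rightarrow> nat set" where
  "leg w = set (drop (THE k. rev_k_hookword k w) w)"

definition connected_word :: "nat list \<Rightarrow> bool" where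
  "connected_word w \<longleftrightarrow> (\<forall>a\<in>supp w. \<forall>b\<in>supp w. \<forall>c. a \<le> c \<and> c \<le> b \<longrightarrow> c \<in> supp w)"

definition CRHW :: "nat \<Rightarrow> nat list set" where
  "CRHW n = {w. length w = n \<and> rev_hookword w \<and> connected_word w}"

end

theory Submission
  imports Defs
begin

(* Applying w = t_{i_1} ... t_{i_n} to alpha adds, for every m, the box with
   entry m in column i_m.  Hence, whatever alpha is, the entries of tau_w in column c are
   exactly the positions m with i_m = c (fill_col_entries).  This is proved by induction
   on the word from two facts about a single step: old entries are shifted by one and the
   new box is empty before (fill_Cons_col_entries), which needs the invariant that every
   filled box lies inside the current diagram (fill_boxes_in_diagram).
   The theorem thereby becomes a statement about the word alone: in a reverse k-hookword,
   a letter j outside the leg occurs only in the weakly increasing part i_1 <= ... <= i_k,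
   so every occurrence of j precedes every occurrence of a larger letter
   (hookword_position_order, letter_positions_before).  Connectedness guarantees that
   j + 1 occurs in w when j is not the maximal letter (connected_word_Suc), so both columns
   are non-empty, and the greatest position of j is below the least position of j + 1. *)

section \<open>Positions of a letter in a word\<close>

(* The 1-based positions m with i_m = c; these will be the entries of column c. *)
definition letter_positions :: "nat list \<Rightarrow> nat \<Rightarrow> nat set" where
  "letter_positions w c = {m. 0 < m \<and> m \<le> length w \<and> w ! (m - 1) = c}"

lemma letter_positions_Cons:
  "letter_positions (i # w) c = (if i = c then {1} else {}) \<union> Suc ` letter_positions w c"
proof (rule set_eqI)
  fix m
  show "m \<in> letter_positions (i # w) c \<longleftrightarrow>
        m \<in> (if i = c then {1} else {}) \<union> Suc ` letter_positions w c"
    by (cases m) (auto simp: letter_positions_def nth_Cons' image_iff)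
qed

lemma finite_letter_positions: "finite (letter_positions w c)"
  by (rule finite_subset[of _ "{..length w}"]) (auto simp: letter_positions_def)

lemma letter_positions_nonempty:
  assumes "c \<in> set w" shows "letter_positions w c \<noteq> {}"
proof -
  obtain p where "p < length w" "w ! p = c" using assms by (auto simp: in_set_conv_nth)
  then have "Suc p \<in> letter_positions w c" by (simp add: letter_positions_def)
  then show ?thesis by blast
qed

section \<open>The box-adding operators and the filling\<close>

lemma tbox_1: "tbox 1 \<gamma> = Some (1 # \<gamma>, 1, 1)"
  by (simp add: tbox_def)

lemma tbox_SomeE:
  assumes "tbox i \<gamma> = Some (\<delta>, r, c)" and "i \<noteq> 1"
  obtains k where "k < length \<gamma>" "\<gamma> ! k = i - 1" "\<delta> = \<gamma>[k := i]" "r = Suc k" "c = i" "0 < i"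
proof -
  have i0: "i \<noteq> 0" and mem: "i - 1 \<in> set \<gamma>"
    using assms by (auto simp: tbox_def split: if_splits)
  define k where "k = (LEAST k. k < length \<gamma> \<and> \<gamma> ! k = i - 1)"
  have "\<exists>k. k < length \<gamma> \<and> \<gamma> ! k = i - 1"
    using mem by (auto simp: in_set_conv_nth)
  then have "k < length \<gamma> \<and> \<gamma> ! k = i - 1"
    unfolding k_def by (rule LeastI_ex)
  moreover have "\<delta> = \<gamma>[k := i] \<and> r = Suc k \<and> c = i"
    using assms i0 mem unfolding k_def by (auto simp: tbox_def Let_def)
  ultimately show thesis using i0 by (intro that) auto
qed

lemma fill_act: "map_option fst (fill w \<alpha>) = act w \<alpha>"
proof (induction w)
  case Nil
  then show ?case by (simp add: act_def)
next
  case (Cons i w)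
  have "act (i # w) \<alpha> = top i (act w \<alpha>)" by (simp add: act_def)
  then show ?case
    by (cases "fill w \<alpha>")
       (auto simp: top_def simp flip: Cons.IH split: option.splits prod.splits)
qed

lemma fill_ConsE:
  assumes "fill (i # w) \<alpha> = Some (\<delta>, F)" and "fill w \<alpha> = Some (\<gamma>, F0)"
  obtains r c where "tbox i \<gamma> = Some (\<delta>, r, c)"
    "F = (\<lambda>(a, b). if (a, b) = (r, c) then Some 1
                  else if i = 1 then (if a \<le> 1 then None else map_option Suc (F0 (a - 1, b)))
                  else map_option Suc (F0 (a, b)))"
  using assms by (auto split: option.splits)

lemma fill_boxes_in_diagram:
  "fill w \<alpha> = Some (\<delta>, F) \<Longrightarrow> F (a, b) = Some e \<Longrightarrow>
     0 < a \<and> a \<le> length \<delta> \<and> b \<le> \<delta> ! (a - 1)"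
proof (induction w arbitrary: \<delta> F a b e)
  case Nil
  then show ?case by auto
next
  case (Cons i w)
  obtain \<gamma> F0 where fw: "fill w \<alpha> = Some (\<gamma>, F0)"
    using Cons.prems(1) by (auto split: option.splits)
  obtain r c where tb: "tbox i \<gamma> = Some (\<delta>, r, c)"
    and F: "F = (\<lambda>(a, b). if (a, b) = (r, c) then Some 1
                  else if i = 1 then (if a \<le> 1 then None else map_option Suc (F0 (a - 1, b)))
                  else map_option Suc (F0 (a, b)))"
    using Cons.prems(1) fw by (rule fill_ConsE)
  show ?case
  proof (cases "i = 1")
    case True
    then have \<delta>: "\<delta> = 1 # \<gamma>" "r = 1" "c = 1" using tb unfolding True tbox_1 by auto
    show ?thesis
    proof (cases "(a, b) = (1, 1)")
      case False
      then obtain e' where "1 < a" "F0 (a - 1, b) = Some e'"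
        using Cons.prems(2) True \<delta> F by (auto split: if_splits)
      with Cons.IH[OF fw] show ?thesis using \<delta> by (cases a) auto
    qed (use \<delta> in simp)
  next
    case False
    obtain k where k: "k < length \<gamma>" "\<gamma> ! k = i - 1" "\<delta> = \<gamma>[k := i]" "r = Suc k" "c = i"
      using tb False by (rule tbox_SomeE)
    show ?thesis
    proof (cases "(a, b) = (r, c)")
      case False
      then obtain e' where "F0 (a, b) = Some e'"
        using Cons.prems(2) \<open>i \<noteq> 1\<close> F by (auto split: if_splits)
      from Cons.IH[OF fw this] have "0 < a" "a \<le> length \<gamma>" "b \<le> \<gamma> ! (a - 1)" by auto
      moreover have "\<gamma> ! (a - 1) \<le> \<delta> ! (a - 1)"
        using k \<open>a \<le> length \<gamma>\<close> \<open>0 < a\<close> by (cases "a - 1 = k") auto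
      ultimately show ?thesis using k by simp
    qed (use k in simp)
  qed
qed

lemma col_entries_iff: "e \<in> col_entries F c \<longleftrightarrow> (\<exists>r. F (r, c) = Some e)"
  by (simp add: col_entries_def)

lemma col_entries_add_box:
  assumes "G box = None"
  shows "col_entries (\<lambda>p. if p = box then Some 1 else map_option Suc (G p)) c =
         (if snd box = c then {1} else {}) \<union> Suc ` col_entries G c"
    (is "col_entries ?F c = ?new \<union> Suc ` col_entries G c")
proof (rule set_eqI, rule iffI)
  fix e
  assume "e \<in> col_entries ?F c"
  then obtain r where r: "?F (r, c) = Some e" by (auto simp: col_entries_def)
  show "e \<in> ?new \<union> Suc ` col_entries G c"
  proof (cases "(r, c) = box")
    case True
    then show ?thesis using r by auto
  next
    case False
    then obtain e' where "G (r, c) = Some e'" "e = Suc e'" using r by auto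
    then show ?thesis by (auto simp: col_entries_def)
  qed
next
  fix e
  assume e: "e \<in> ?new \<union> Suc ` col_entries G c"
  show "e \<in> col_entries ?F c"
  proof (cases "e \<in> ?new")
    case True
    then have "?F (fst box, c) = Some e" by (auto split: if_splits)
    then show ?thesis unfolding col_entries_iff by blast
  next
    case False
    then obtain a e' where "e = Suc e'" "G (a, c) = Some e'"
      using e by (auto simp: col_entries_def)
    moreover have "(a, c) \<noteq> box" using assms calculation(2) by auto
    ultimately have "?F (a, c) = Some e" by simp
    then show ?thesis unfolding col_entries_iff by blast
  qed
qed

lemma col_entries_shift_down:
  assumes "\<And>b. G (0, b) = None"
  shows "col_entries (\<lambda>(a, b). if a \<le> 1 then None else G (a - 1, b)) c = col_entries G c"
    (is "col_entries ?F c = _")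
proof (rule set_eqI, rule iffI)
  fix e
  assume "e \<in> col_entries ?F c"
  then obtain a where a: "?F (a, c) = Some e" unfolding col_entries_iff by blast
  then have "\<not> a \<le> 1" by (auto split: if_splits)
  then have "G (a - 1, c) = Some e" using a by simp
  then show "e \<in> col_entries G c" unfolding col_entries_iff by blast
next
  fix e
  assume "e \<in> col_entries G c"
  then obtain a where a: "G (a, c) = Some e" unfolding col_entries_iff by blast
  then have "0 < a" using assms by (cases a) auto
  then have "?F (Suc a, c) = Some e" using a by simp
  then show "e \<in> col_entries ?F c" unfolding col_entries_iff by blast
qed

(* The new box never
   overwrites an old one because it lies outside the old diagram. *)
lemma fill_Cons_col_entries:
  assumes "fill (i # w) \<alpha> = Some (\<delta>, F)" and fw: "fill w \<alpha> = Some (\<gamma>, F0)"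
  shows "col_entries F c = (if i = c then {1} else {}) \<union> Suc ` col_entries F0 c"
proof -
  obtain r cb where tb: "tbox i \<gamma> = Some (\<delta>, r, cb)"
    and F: "F = (\<lambda>(a, b). if (a, b) = (r, cb) then Some 1
                  else if i = 1 then (if a \<le> 1 then None else map_option Suc (F0 (a - 1, b)))
                  else map_option Suc (F0 (a, b)))"
    using assms(1) fw by (rule fill_ConsE)
  note in_diagram = fill_boxes_in_diagram[OF fw]
  show ?thesis
  proof (cases "i = 1")
    case True
    then have box: "r = 1" "cb = 1" using tb unfolding True tbox_1 by auto
    define G where "G = (\<lambda>(a, b). if a \<le> 1 then None else F0 (a - 1, b))"
    have top_row_empty: "F0 (0, b) = None" for b
    proof (rule ccontr)
      assume "F0 (0, b) \<noteq> None"
      then obtain e where "F0 (0, b) = Some e" by blast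
      from in_diagram[OF this] show False by simp
    qed
    have "F = (\<lambda>p. if p = (1, 1) then Some 1 else map_option Suc (G p))"
      unfolding F G_def box using True by (auto split: prod.splits)
    moreover have "G (1, 1) = None" by (simp add: G_def)
    ultimately have "col_entries F c = (if 1 = c then {1} else {}) \<union> Suc ` col_entries G c"
      using col_entries_add_box[of G "(1, 1)" c] by simp
    also have "col_entries G c = col_entries F0 c"
      unfolding G_def using top_row_empty by (rule col_entries_shift_down)
    finally show ?thesis using True by simp
  next
    case False
    obtain k where k: "\<gamma> ! k = i - 1" "r = Suc k" "cb = i" "0 < i"
      using tb False by (rule tbox_SomeE)
    have new_box_empty: "F0 (r, cb) = None"
    proof (rule ccontr)
      assume "F0 (r, cb) \<noteq> None"
      then obtain e where "F0 (r, cb) = Some e" by blast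
      from in_diagram[OF this] have "cb \<le> \<gamma> ! (r - 1)" by blast
      then show False using k by simp
    qed
    have "F = (\<lambda>p. if p = (r, cb) then Some 1 else map_option Suc (F0 p))"
      unfolding F using False by auto
    then show ?thesis using col_entries_add_box[of F0 "(r, cb)" c, OF new_box_empty] k by simp
  qed
qed

lemma fill_col_entries:
  "fill w \<alpha> = Some (\<delta>, F) \<Longrightarrow> col_entries F c = letter_positions w c"
proof (induction w arbitrary: \<delta> F)
  case Nil
  then show ?case by (auto simp: col_entries_def letter_positions_def)
next
  case (Cons i w)
  obtain \<gamma> F0 where fw: "fill w \<alpha> = Some (\<gamma>, F0)"
    using Cons.prems by (auto split: option.splits)
  show ?case
    using fill_Cons_col_entries[OF Cons.prems fw] Cons.IH[OF fw] by (simp add: letter_positions_Cons)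
qed

section \<open>Reverse hookwords\<close>

(* The index k of a reverse k-hookword is determined by the word: position k is the
   unique peak, where the weak ascent turns into a strict descent. *)
lemma rev_k_hookword_unique:
  assumes "rev_k_hookword k w" and "rev_k_hookword k' w"
  shows "k = k'"
proof -
  have no_smaller: "\<not> a < b" if ha: "rev_k_hookword a w" and hb: "rev_k_hookword b w" for a b
  proof
    assume "a < b"
    have b: "b < length w" using hb by (simp add: rev_k_hookword_def)
    have decreasing: "sorted_wrt (>) (drop a w)" using ha by (simp add: rev_k_hookword_def)
    have "1 < length (drop a w)" using b \<open>a < b\<close> by simp
    from sorted_wrt_nth_less[OF decreasing _ this, of 0]
    have "drop a w ! 0 > drop a w ! 1" by simp
    then have descent: "w ! a > w ! Suc a" using b \<open>a < b\<close> by simp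
    have "sorted (take (Suc b) w)" using hb by (simp add: rev_k_hookword_def)
    then have "take (Suc b) w ! a \<le> take (Suc b) w ! Suc a"
      using b \<open>a < b\<close> by (intro sorted_nth_mono) auto
    then have "w ! a \<le> w ! Suc a" using b \<open>a < b\<close> by simp
    with descent show False by simp
  qed
  show ?thesis using no_smaller[OF assms] no_smaller[OF assms(2,1)] by simp
qed

lemma leg_eq:
  assumes "rev_k_hookword k w" shows "leg w = set (drop k w)"
proof -
  have "(THE k. rev_k_hookword k w) = k"
    using assms rev_k_hookword_unique by (intro the_equality) auto
  then show ?thesis by (simp add: leg_def)
qed

(* A letter outside the leg occurs only in the weakly increasing part of the word, so each
   of its occurrences comes before every occurrence of a larger letter. *)
lemma hookword_position_order:
  assumes hook: "rev_k_hookword k w"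
    and p: "p < length w" and q: "q < length w"
    and less: "w ! p < w ! q" and not_leg: "w ! p \<notin> leg w"
  shows "p < q"
proof -
  have "p < k"
  proof (rule ccontr)
    assume "\<not> p < k"
    then have "drop k w ! (p - k) = w ! p" and "p - k < length (drop k w)" using p by auto
    then have "w ! p \<in> set (drop k w)" by (metis nth_mem)
    then show False using not_leg leg_eq[OF hook] by simp
  qed
  show "p < q"
  proof (rule ccontr)
    assume "\<not> p < q"
    have "sorted (take (Suc k) w)" using hook by (simp add: rev_k_hookword_def)
    then have "take (Suc k) w ! q \<le> take (Suc k) w ! p"
      using \<open>p < k\<close> \<open>\<not> p < q\<close> p by (intro sorted_nth_mono) auto
    then have "w ! q \<le> w ! p" using \<open>p < k\<close> \<open>\<not> p < q\<close> by simp
    with less show False by simp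
  qed
qed

lemma letter_positions_before:
  assumes hook: "rev_k_hookword k w" and "j \<notin> leg w" and "j < c"
    and m: "m \<in> letter_positions w j" and m': "m' \<in> letter_positions w c"
  shows "m < m'"
proof -
  have p: "m - 1 < length w" "w ! (m - 1) = j" "0 < m"
    using m by (auto simp: letter_positions_def)
  have q: "m' - 1 < length w" "w ! (m' - 1) = c" "0 < m'"
    using m' by (auto simp: letter_positions_def)
  have "w ! (m - 1) < w ! (m' - 1)" and "w ! (m - 1) \<notin> leg w"
    using p(2) q(2) assms(2,3) by simp_all
  from hookword_position_order[OF hook p(1) q(1) this] show "m < m'" using p(3) q(3) by simp
qed

lemma connected_word_Suc:
  assumes "connected_word w" and "j \<in> supp w" and "j \<noteq> Max (supp w)"
  shows "Suc j \<in> supp w"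
proof -
  have fin: "finite (supp w)" by (simp add: supp_def)
  have max: "Max (supp w) \<in> supp w" using fin assms(2) by (intro Max_in) auto
  have "j \<le> Max (supp w)" using fin assms(2) by (rule Max_ge)
  then have "Suc j \<le> Max (supp w)" using assms(3) by simp
  then show ?thesis
    using assms(1,2) max unfolding connected_word_def by (meson le_SucI order_refl)
qed

theorem mainTheorem8:
  fixes \<alpha> \<beta> w :: "nat list" and n j :: nat
  assumes "is_composition \<alpha>"
    and "w \<in> CRHW n"
    and "act w \<alpha> = Some \<beta>"
    and "1 \<le> j" and "j \<in> supp w" and "j \<noteq> Max (supp w)"
    and "j \<notin> leg w"
  shows "Max (col_entries (tau w \<alpha>) j) < Min (col_entries (tau w \<alpha>) (Suc j))"
proof -
  obtain k where hook: "rev_k_hookword k w"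
    using assms(2) by (auto simp: CRHW_def rev_hookword_def)
  have "connected_word w" using assms(2) by (simp add: CRHW_def)
  then have "Suc j \<in> supp w" using assms(5,6) by (rule connected_word_Suc)
  then have nonempty: "letter_positions w j \<noteq> {}" "letter_positions w (Suc j) \<noteq> {}"
    using assms(5) unfolding supp_def by (simp_all add: letter_positions_nonempty)
  obtain \<delta> F where "fill w \<alpha> = Some (\<delta>, F)"
    using fill_act[of w \<alpha>] assms(3) by (cases "fill w \<alpha>") auto
  then have columns: "col_entries (tau w \<alpha>) c = letter_positions w c" for c
    by (simp add: tau_def fill_col_entries)
  have "Max (letter_positions w j) \<in> letter_positions w j"
    using finite_letter_positions nonempty(1) by (rule Max_in)
  moreover have "Min (letter_positions w (Suc j)) \<in> letter_positions w (Suc j)"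
    using finite_letter_positions nonempty(2) by (rule Min_in)
  ultimately show ?thesis
    unfolding columns by (rule letter_positions_before[OF hook assms(7) lessI])
qed

end
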